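(* Let $m\equiv 2\pmod 4$ and $L=L'$. For $a\in\mathcal{R}$ the Lee weight of $ev(a)=(Tr(ax))_{x\in L'}$ is: (a) $0$ if $a=0$; (b) if $a=(u-1)^2a_3$ with $a_3\in\mathbb{F}_{3^m}$: $w_L(ev(a))=3^{3m}-3^{5m/2}$ when $a_3\in\mathcal{Q}$, and $w_L(ev(a))=3^{3m}+3^{5m/2}$ when $a_3\in\mathcal{N}$; (c) $w_L(ev(a))=3^{3m}-3^{2m}$ if $a\in\mathcal{R}\setminus\langle (u-1)^2\rangle$.
   Context: Let $R=\mathbb{F}_3[u]/(u^3-1)$ and $\mathcal{R}=\mathbb{F}_{3^m}[u]/(u^3-1)=\mathbb{F}_{3^m}+u\mathbb{F}_{3^m}+u^2\mathbb{F}_{3^m}$. Every element of $\mathcal{R}$ is uniquely $x_1+x_2(u-1)+x_3(u-1)^2$ with $x_i\in\mathbb{F}_{3^m}$; units are those with $x_1\neq0$. $\langle (u-1)^2\rangle=\{(u-1)^2a_3:a_3\in\mathbb{F}_{3^m}\}$. $Tr:\mathcal{R}\to R$ is $Tr(a+ub+u^2c)=tr(a)+u\,tr(b)+u^2tr(c)$, with $tr$ the absolute trace $\mathbb{F}_{3^m}\to\mathbb{F}_3$. $\mathcal{Q}$ and $\mathcal{N}$ denote the nonzero squares and the nonsquares of $\mathbb{F}_{3^m}$; $L'=\{x_1+x_2(u-1)+x_3(u-1)^2:x_1\in\mathcal{Q},x_2,x_3\in\mathbb{F}_{3^m}\}$. The Gray map $\phi:R\to\mathbb{F}_3^3$ is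 $\phi(a'+ub'+u^2c')=(a',b',c')$ ($a',b',c'\in\mathbb{F}_3$), extended coordinatewise to $R^n\to\mathbb{F}_3^{3n}$; the Lee weight $w_L(v)$ of $v\in R^n$ is the Hamming weight of $\phi(v)$. *)

theory Defs
  imports Main
begin

text \<open>Elements of the ring F[u]/(u^3-1) are represented as triples (a,b,c) standing for a + u b + u^2 c.\<close>
type_synonym 'a R3 = "'a \<times> 'a \<times> 'a"

definition radd :: "'a::comm_ring_1 R3 \<Rightarrow> 'a R3 \<Rightarrow> 'a R3" where
  "radd p q = (case p of (a,b,c) \<Rightarrow> case q of (x,y,z) \<Rightarrow> (a+x, b+y, c+z))"

definition rmul :: "'a::comm_ring_1 R3 \<Rightarrow> 'a R3 \<Rightarrow> 'a R3" where
  "rmul p q = (case p of (a,b,c) \<Rightarrow> case q of (x,y,z) \<Rightarrow>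
      (a*x + b*z + c*y, a*y + b*x + c*z, a*z + b*y + c*x))"

definition rconst :: "'a::comm_ring_1 \<Rightarrow> 'a R3" where
  "rconst x = (x, 0, 0)"

definition um1 :: "'a::comm_ring_1 R3" where
  "um1 = (-1, 1, 0)"

definition um1sq :: "'a::comm_ring_1 R3" where
  "um1sq = rmul um1 um1"

definition elem :: "'a::comm_ring_1 \<Rightarrow> 'a \<Rightarrow> 'a \<Rightarrow> 'a R3" where
  "elem x1 x2 x3 = radd (rconst x1) (radd (rmul (rconst x2) um1) (rmul (rconst x3) um1sq))"

definition Qset :: "'a::field set" where
  "Qset = {x. x \<noteq> 0 \<and> (\<exists>y. x = y^2)}"

definition Nset :: "'a::field set" where
  "Nset = {x. \<not> (\<exists>y. x = y^2)}"

definition Lprime :: "'a::field R3 set" where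
  "Lprime = {elem x1 x2 x3 | x1 x2 x3. x1 \<in> Qset}"

definition ideal_um1sq :: "'a::field R3 set" where
  "ideal_um1sq = {rmul um1sq (rconst a3) | a3. True}"

text \<open>Absolute trace F_{3^m} -> F_3; the value lies in the prime subfield of the field.\<close>
definition tr :: "nat \<Rightarrow> 'a::field \<Rightarrow> 'a" where
  "tr m x = (\<Sum>i<m. x ^ (3 ^ i))"

definition Tr :: "nat \<Rightarrow> 'a::field R3 \<Rightarrow> 'a R3" where
  "Tr m p = (case p of (a,b,c) \<Rightarrow> (tr m a, tr m b, tr m c))"

text \<open>Lee weight of an element of R = F_3[u]/(u^3-1): Hamming weight of its Gray image (a',b',c').\<close>
definition lee_wt :: "'a::zero R3 \<Rightarrow> nat" where
  "lee_wt p = (case p of (a,b,c) \<Rightarrow>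
      (if a = 0 then 0 else 1) + (if b = 0 then 0 else 1) + (if c = 0 then 0 else 1))"

definition wL_ev :: "nat \<Rightarrow> 'a::field R3 \<Rightarrow> nat" where
  "wL_ev m a = (\<Sum>x\<in>Lprime. lee_wt (Tr m (rmul a x)))"

end

theory Submission
  imports Defs "HOL-Computational_Algebra.Polynomial" "HOL-Library.Cardinality"
begin

text \<open>
  Write a = (p, q, r) in the basis 1, u, u^2 and an element of L' as
  x1 + x2 (u - 1) + x3 (u - 1)^2 with x1 a nonzero square. Each Gray coordinate of Tr (a x) is
  tr (c1 x1 + c2 x2 + c3 x3) for coefficients read off from a; in characteristic 3 always
  c3 = p + q + r. When (c2, c3) is nonzero, summing over x2 and x3 equidistributes the argument
  of tr. This gives case (c), because a lies outside the ideal generated by (u - 1)^2 exactly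
  when p = q = r fails.

  For a = (u - 1)^2 a3 = (a3, a3, a3) only x1 matters, and everything reduces to counting the y
  with tr (y^2) = 0. For m = 2k with k odd there is an i with i^2 = -1 and i^(3^k) = -i, so the
  field is K + i K with K = GF(3^k), and tr ((u + i w)^2) = - tr_K ((u - w) (u + w)): a
  hyperbolic form over K, which has 3^k + (3^k - 1) 3^(k - 1) zeros.
\<close>

section \<open>Frobenius and the absolute trace in characteristic 3\<close>

lemma char3_frobenius_add:
  fixes x y :: "'a::comm_ring_1"
  assumes "(3::'a) = 0"
  shows "(x + y) ^ 3 ^ n = x ^ 3 ^ n + y ^ 3 ^ n"
proof (induction n)
  case (Suc n)
  have cube: "(a + b) ^ 3 = a ^ 3 + b ^ 3" for a b :: 'a
  proof -
    have "(a + b) ^ 3 = a ^ 3 + b ^ 3 + 3 * (a\<^sup>2 * b + a * b\<^sup>2)"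
      by (simp add: power3_eq_cube power2_eq_square algebra_simps)
    with assms show ?thesis by simp
  qed
  have "(x + y) ^ 3 ^ Suc n = ((x + y) ^ 3 ^ n) ^ 3"
    by (simp add: power_mult[symmetric] mult.commute)
  also have "\<dots> = (x ^ 3 ^ n) ^ 3 + (y ^ 3 ^ n) ^ 3"
    by (simp only: Suc cube)
  also have "\<dots> = x ^ 3 ^ Suc n + y ^ 3 ^ Suc n"
    by (simp add: power_mult[symmetric] mult.commute)
  finally show ?case .
qed simp

lemma char3_frobenius_sum:
  fixes g :: "'b \<Rightarrow> 'a::comm_ring_1"
  assumes "(3::'a) = 0"
  shows "(\<Sum>i\<in>A. g i) ^ 3 ^ n = (\<Sum>i\<in>A. g i ^ 3 ^ n)"
proof (cases "finite A")
  case True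
  then show ?thesis
    by (induction A rule: finite_induct) (auto simp: char3_frobenius_add[OF assms] power_0_left)
qed (simp add: power_0_left)

lemma tr_add:
  fixes x y :: "'a::field"
  assumes "(3::'a) = 0"
  shows "tr n (x + y) = tr n x + tr n y"
  unfolding tr_def by (simp add: char3_frobenius_add[OF assms] sum.distrib)

lemma tr_uminus: "tr n (- x :: 'a::field) = - tr n x"
  unfolding tr_def by (simp add: sum_negf)

lemma tr_diff:
  fixes x y :: "'a::field"
  assumes "(3::'a) = 0"
  shows "tr n (x - y) = tr n x - tr n y"
  using tr_add[OF assms, of n x "- y"] by (simp add: tr_uminus)

lemma tr_zero [simp]: "tr n (0::'a::field) = 0"
  unfolding tr_def by (simp add: power_0_left)

lemma tr_cube:
  fixes z :: "'a::field"
  assumes "(3::'a) = 0" and "z ^ 3 ^ n = z"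
  shows "tr n z ^ 3 = tr n z"
proof -
  have "tr n z ^ 3 = (\<Sum>i<n. z ^ 3 ^ Suc i)"
    unfolding tr_def using char3_frobenius_sum[OF assms(1), of "\<lambda>i. z ^ 3 ^ i" "{..<n}" 1]
    by (simp add: power_mult[symmetric] mult.commute)
  also have "\<dots> = tr (Suc n) z - z"
    unfolding tr_def by (subst sum.lessThan_Suc_shift) simp
  also have "tr (Suc n) z = tr n z + z"
    using assms(2) unfolding tr_def by simp
  finally show ?thesis by simp
qed

lemma tr_in_prime_field:
  fixes z :: "'a::field"
  assumes "(3::'a) = 0" and "z ^ 3 ^ n = z"
  shows "tr n z \<in> {0, 1, -1}"
proof -
  have "tr n z * (tr n z - 1) * (tr n z + 1) = 0"
    using tr_cube[OF assms] by (simp add: algebra_simps power3_eq_cube)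
  then show ?thesis by (auto simp: eq_neg_iff_add_eq_0)
qed

lemma finite_field_power_card: "x ^ CARD('a) = (x :: 'a::{field,finite})"
proof (cases "x = 0")
  case False
  let ?S = "UNIV - {0::'a}"
  have "bij_betw ((*) x) ?S ?S"
    by (rule bij_betw_byWitness[of _ "\<lambda>y. y / x"]) (use False in auto)
  then have "(\<Prod>y\<in>?S. x * y) = (\<Prod>y\<in>?S. y)"
    using prod.reindex_bij_betw[of "(*) x" ?S ?S "\<lambda>y. y"] by (simp only: comp_def)
  moreover have "(\<Prod>y\<in>?S. x * y) = x ^ card ?S * (\<Prod>y\<in>?S. y)"
    by (simp only: prod.distrib prod_constant)
  moreover have "(\<Prod>y\<in>?S. y) \<noteq> 0"
    by (simp add: prod_zero_iff)
  ultimately have "x ^ card ?S = 1" by simp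
  moreover have "CARD('a) = Suc (card ?S)"
    by (rule card_Suc_Diff1[symmetric]) auto
  ultimately show ?thesis by (simp only: power_Suc mult_1_right)
qed (simp add: power_0_left)

lemma char3_of_card:
  assumes "CARD('a::{field,finite}) = 3 ^ m"
  shows "(3::'a) = 0"
proof -
  have "(\<Sum>y\<in>(UNIV::'a set). y) = (\<Sum>y\<in>UNIV. y + 1)"
    by (rule sum.reindex_bij_witness[of _ "\<lambda>y. y + 1" "\<lambda>y. y - 1"]) auto
  then have "of_nat CARD('a) = (0::'a)"
    by (simp add: sum.distrib)
  then have "(3::'a) ^ m = 0" using assms by simp
  then show ?thesis by simp
qed

lemma char3_two_ne_zero: "(3::'a::field) = 0 \<Longrightarrow> (2::'a) \<noteq> 0"
proof
  assume "(3::'a) = 0" "(2::'a) = 0"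
  then have "(3::'a) - 2 = 0" by simp
  then show False by simp
qed

lemma char3_two_eq: "(3::'a::comm_ring_1) = 0 \<Longrightarrow> (2::'a) = -1"
  by (simp add: eq_neg_iff_add_eq_0)

lemma char3_double_add_eq_zero:
  fixes x y :: "'a::comm_ring_1"
  assumes "(3::'a) = 0" and "x + x + y = 0"
  shows "y = x"
proof -
  have "y + (x + x) = 0" using assms(2) by (metis add.commute)
  then have "y = - (2 * x)" by (simp only: mult_2 eq_neg_iff_add_eq_0)
  then show ?thesis using char3_two_eq[OF assms(1)] by simp
qed

lemma card_eq_card_image_mult_card_kernel:
  fixes f :: "'a::ab_group_add \<Rightarrow> 'b::ab_group_add"
  assumes "finite S"
    and add_closed: "\<And>x y. x \<in> S \<Longrightarrow> y \<in> S \<Longrightarrow> x + y \<in> S"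
    and uminus_closed: "\<And>x. x \<in> S \<Longrightarrow> - x \<in> S"
    and additive: "\<And>x y. x \<in> S \<Longrightarrow> y \<in> S \<Longrightarrow> f (x + y) = f x + f y"
  shows "card S = card (f ` S) * card {z\<in>S. f z = 0}"
proof -
  have fiber: "{z\<in>S. f z = f x} = (\<lambda>z. z + x) ` {z\<in>S. f z = 0}" if x: "x \<in> S" for x
  proof (intro set_eqI iffI)
    fix y assume y: "y \<in> {z\<in>S. f z = f x}"
    then have d: "y + - x \<in> S" using x add_closed uminus_closed by blast
    have "f (y + - x) + f x = f y"
      using additive[OF d x] by simp
    with y have "f (y + - x) = 0" by simp
    with d have "y + - x \<in> {z\<in>S. f z = 0}" by simp
    moreover have "y = (y + - x) + x" by simp
    ultimately show "y \<in> (\<lambda>z. z + x) ` {z\<in>S. f z = 0}" by blast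
  next
    fix y assume "y \<in> (\<lambda>z. z + x) ` {z\<in>S. f z = 0}"
    then obtain z where "z \<in> S" "f z = 0" "y = z + x" by blast
    then show "y \<in> {z\<in>S. f z = f x}" using x add_closed[of z x] additive[of z x] by simp
  qed
  have "card S = card (\<Union>t\<in>f ` S. {z\<in>S. f z = t})"
    by (rule arg_cong[where f = card]) blast
  also have "\<dots> = (\<Sum>t\<in>f ` S. card {z\<in>S. f z = t})"
    by (rule card_UN_disjoint) (use assms(1) in auto)
  also have "\<dots> = (\<Sum>t\<in>f ` S. card {z\<in>S. f z = 0})"
  proof (rule sum.cong[OF refl])
    fix t assume "t \<in> f ` S"
    then obtain x where "x \<in> S" "t = f x" by blast
    moreover have "inj_on (\<lambda>z. z + x) {z\<in>S. f z = 0}" by (simp add: inj_on_def)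
    ultimately show "card {z\<in>S. f z = t} = card {z\<in>S. f z = 0}"
      using fiber[of x] card_image[of "\<lambda>z. z + x" "{z\<in>S. f z = 0}"] by simp
  qed
  finally show ?thesis by simp
qed

lemma card_Collect_bij_betw:
  assumes "bij_betw f A B"
  shows "card {x\<in>A. P (f x)} = card {y\<in>B. P y}"
proof -
  have "f ` {x\<in>A. P (f x)} = {y\<in>B. P y}"
    using assms unfolding bij_betw_def by blast
  moreover have "inj_on f {x\<in>A. P (f x)}"
    using assms unfolding bij_betw_def by (auto intro: inj_on_subset)
  ultimately show ?thesis by (metis card_image)
qed

lemma card_tr_eq_zero_le:
  assumes "n \<ge> 1"
  shows "card {z\<in>S. tr n (z::'a::field) = 0} \<le> 3 ^ (n - 1)"
proof -
  define P :: "'a poly" where "P = (\<Sum>i<n. monom 1 (3 ^ i))"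
  have "degree P \<le> 3 ^ (n - 1)"
    unfolding P_def
  proof (rule degree_sum_le)
    fix i assume "i \<in> {..<n}"
    then have "3 ^ i \<le> (3::nat) ^ (n - 1)" by (intro power_increasing) auto
    then show "degree (monom (1::'a) (3 ^ i)) \<le> 3 ^ (n - 1)"
      using degree_monom_le order_trans by blast
  qed simp
  moreover have "coeff P (3 ^ (n - 1)) = 1"
    using assms unfolding P_def coeff_sum coeff_monom by (simp add: sum.delta_remove)
  then have "P \<noteq> 0" by auto
  moreover have "{z. poly P z = 0} = {z::'a. tr n z = 0}"
    unfolding P_def tr_def by (simp add: poly_sum poly_monom)
  ultimately have "finite {z::'a. tr n z = 0}" and "card {z::'a. tr n z = 0} \<le> 3 ^ (n - 1)"
    using poly_roots_finite[of P] card_poly_roots_bound[of P] by auto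
  moreover have "card {z\<in>S. tr n z = 0} \<le> card {z::'a. tr n z = 0}"
    using \<open>finite {z::'a. tr n z = 0}\<close> by (intro card_mono) auto
  ultimately show ?thesis by linarith
qed

lemma card_tr_kernel:
  fixes S :: "'a::field set"
  assumes char3: "(3::'a) = 0" and "finite S"
    and "\<And>x y. x \<in> S \<Longrightarrow> y \<in> S \<Longrightarrow> x + y \<in> S" and "\<And>x. x \<in> S \<Longrightarrow> - x \<in> S"
    and frob: "\<And>z. z \<in> S \<Longrightarrow> z ^ 3 ^ n = z" and card: "card S = 3 ^ n" and "n \<ge> 1"
  shows "card {z\<in>S. tr n z = 0} = 3 ^ (n - 1)"
proof -
  have "card S = card (tr n ` S) * card {z\<in>S. tr n z = 0}"
    by (rule card_eq_card_image_mult_card_kernel) (use assms in \<open>simp_all add: tr_add\<close>)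
  moreover have "card (tr n ` S) \<le> 3"
  proof -
    have "tr n ` S \<subseteq> {0, 1, -1}" using tr_in_prime_field char3 frob by blast
    then have "card (tr n ` S) \<le> card {0, 1, -1::'a}" by (intro card_mono) auto
    also have "\<dots> \<le> 3" using card_length[of "[0, 1, -1::'a]"] by simp
    finally show ?thesis .
  qed
  moreover have "card {z\<in>S. tr n z = 0} \<le> 3 ^ (n - 1)"
    by (rule card_tr_eq_zero_le[OF \<open>n \<ge> 1\<close>])
  moreover have "(3::nat) ^ n = 3 * 3 ^ (n - 1)" using \<open>n \<ge> 1\<close> power_minus_mult[of n "3::nat"] by simp
  ultimately have "3 * 3 ^ (n - 1) \<le> 3 * card {z\<in>S. tr n z = 0}"
    using card mult_le_mono1[of "card (tr n ` S)" 3 "card {z\<in>S. tr n z = 0}"] by linarith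
  with \<open>card {z\<in>S. tr n z = 0} \<le> 3 ^ (n - 1)\<close> show ?thesis by linarith
qed

lemma card_tr_nonzero:
  assumes "CARD('a::{field,finite}) = 3 ^ n" and "n \<ge> 1"
  shows "card {z::'a. tr n z \<noteq> 0} = 2 * 3 ^ (n - 1)"
proof -
  have "card {z\<in>(UNIV::'a set). tr n z = 0} = 3 ^ (n - 1)"
    by (rule card_tr_kernel[OF char3_of_card[OF assms(1)]])
      (use assms finite_field_power_card[where 'a = 'a] in auto)
  moreover have "{z::'a. tr n z \<noteq> 0} = UNIV - {z\<in>UNIV. tr n z = 0}" by auto
  moreover have "(3::nat) ^ n = 3 * 3 ^ (n - 1)" using assms(2) power_minus_mult[of n "3::nat"] by simp
  ultimately show ?thesis using assms(1) by (simp add: card_Diff_subset)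
qed

section \<open>Squares and nonsquares\<close>

lemma card_square_roots_Qset:
  fixes x :: "'a::field"
  assumes "(2::'a) \<noteq> 0" and "x \<in> Qset"
  shows "card {y. y\<^sup>2 = x} = 2"
proof -
  obtain y where y: "x = y\<^sup>2" "y \<noteq> 0" using assms(2) unfolding Qset_def by auto
  have "y \<noteq> - y"
  proof
    assume "y = - y"
    then have "2 * y = 0" by simp
    with assms(1) y(2) show False by simp
  qed
  moreover have "{z. z\<^sup>2 = x} = {y, - y}" using y(1) by (auto simp: power2_eq_iff)
  ultimately show ?thesis by simp
qed

lemma card_nonzero_square_preimage:
  fixes P :: "'a::{field,finite} \<Rightarrow> bool"
  assumes "(2::'a) \<noteq> 0"
  shows "card {y. y \<noteq> 0 \<and> P (y\<^sup>2)} = 2 * card {x\<in>Qset. P x}"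
proof -
  have "{y. y \<noteq> 0 \<and> P (y\<^sup>2)} = (\<Union>x\<in>{x\<in>Qset. P x}. {y. y\<^sup>2 = x})"
    unfolding Qset_def by auto
  also have "card \<dots> = (\<Sum>x\<in>{x\<in>Qset. P x}. card {y. y\<^sup>2 = x})"
    by (rule card_UN_disjoint) auto
  also have "\<dots> = (\<Sum>x\<in>{x\<in>Qset. P x}. 2)"
    using card_square_roots_Qset[OF assms] by (intro sum.cong) auto
  finally show ?thesis by simp
qed

lemma card_Qset:
  assumes "(2::'a::{field,finite}) \<noteq> 0"
  shows "2 * card (Qset::'a set) = CARD('a) - 1"
proof -
  have "2 * card (Qset::'a set) = card {y::'a. y \<noteq> 0 \<and> True}"
    using card_nonzero_square_preimage[OF assms, of "\<lambda>_. True"] by simp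
  also have "{y::'a. y \<noteq> 0 \<and> True} = UNIV - {0}" by auto
  finally show ?thesis by (simp add: card_Diff_singleton)
qed

lemma Qset_Nset_partition:
  shows "UNIV - {0} = Qset \<union> (Nset::'a::field set)" and "Qset \<inter> (Nset::'a set) = {}"
    and "(0::'a) \<notin> Nset"
  unfolding Qset_def Nset_def by (auto simp: power_0_left)

lemma card_Nset:
  assumes "(2::'a::{field,finite}) \<noteq> 0"
  shows "card (Nset::'a set) = card (Qset::'a set)"
proof -
  have "card (UNIV - {0::'a}) = card (Qset::'a set) + card (Nset::'a set)"
    unfolding Qset_Nset_partition(1)
    by (rule card_Un_disjoint) (simp_all add: Qset_Nset_partition(2))
  then have "card (Qset::'a set) + card (Nset::'a set) = CARD('a) - 1"
    by (simp add: card_Diff_singleton)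
  with card_Qset[OF assms] show ?thesis by simp
qed

lemma Qset_mult: "c \<in> Qset \<Longrightarrow> x \<in> Qset \<Longrightarrow> c * x \<in> (Qset::'a::field set)"
  unfolding Qset_def by (auto simp: power_mult_distrib[symmetric])

lemma Qset_divide: "c \<in> Qset \<Longrightarrow> x \<in> Qset \<Longrightarrow> x / c \<in> (Qset::'a::field set)"
  unfolding Qset_def by (auto simp: power_divide[symmetric])

lemma Nset_mult_Qset:
  assumes "c \<in> Nset" and "x \<in> Qset"
  shows "c * x \<in> (Nset::'a::field set)"
proof -
  obtain y where y: "x = y\<^sup>2" "y \<noteq> 0" using assms(2) unfolding Qset_def by auto
  have "c * x \<noteq> z\<^sup>2" for z
  proof
    assume "c * x = z\<^sup>2"
    then have "c = (z / y)\<^sup>2" using y by (simp add: power_divide field_simps)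
    then show False using assms(1) unfolding Nset_def by blast
  qed
  then show ?thesis unfolding Nset_def by auto
qed

lemma image_mult_Qset_eq_Nset:
  fixes c :: "'a::{field,finite}"
  assumes "(2::'a) \<noteq> 0" and "c \<in> Nset"
  shows "(*) c ` Qset = Nset"
proof (rule card_subset_eq)
  have "c \<noteq> 0" using assms(2) Qset_Nset_partition(3) by auto
  then show "card ((*) c ` Qset) = card (Nset::'a set)"
    using card_Nset[OF assms(1)] by (simp add: card_image inj_on_def)
qed (use Nset_mult_Qset[OF assms(2)] in auto)

lemma Qset_euler_criterion:
  assumes "(2::'a::{field,finite}) \<noteq> 0"
  shows "Qset = {x::'a. x ^ ((CARD('a) - 1) div 2) = 1}"
proof -
  define N where "N = (CARD('a) - 1) div 2"
  have N: "2 * N = CARD('a) - 1" unfolding N_def card_Qset[OF assms, symmetric] by simp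
  have "(1::'a) \<in> Qset" unfolding Qset_def by (auto intro: exI[of _ 1])
  then have "card (Qset::'a set) \<noteq> 0" by auto
  then have "N \<noteq> 0" using N card_Qset[OF assms] by linarith
  have sub: "Qset \<subseteq> {x::'a. x ^ N = 1}"
  proof
    fix x :: 'a assume "x \<in> Qset"
    then obtain y where y: "x = y\<^sup>2" "y \<noteq> 0" unfolding Qset_def by auto
    have "y ^ (CARD('a) - 1) * y = 1 * y"
      using finite_field_power_card[of y] power_minus_mult[of "CARD('a)" y] by simp
    then have "y ^ (CARD('a) - 1) = 1" using y(2) by simp
    then show "x \<in> {x. x ^ N = 1}" using y N by (simp add: power_mult[symmetric] mult.commute)
  qed
  define P :: "'a poly" where "P = monom 1 N + [:-1:]"
  have deg: "degree P = N"
    using \<open>N \<noteq> 0\<close> unfolding P_def by (subst degree_add_eq_left) (simp_all add: degree_monom_eq)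
  then have "P \<noteq> 0" using \<open>N \<noteq> 0\<close> by auto
  moreover have "{x. poly P x = 0} = {x::'a. x ^ N = 1}" unfolding P_def by (simp add: poly_monom)
  ultimately have "card {x::'a. x ^ N = 1} \<le> N" using card_poly_roots_bound[of P] deg by simp
  moreover have "card (Qset::'a set) = N" using card_Qset[OF assms] N by simp
  moreover have "card (Qset::'a set) \<le> card {x::'a. x ^ N = 1}" using sub by (intro card_mono) auto
  ultimately have "Qset = {x::'a. x ^ N = 1}" using sub by (intro card_subset_eq) auto
  then show ?thesis unfolding N_def .
qed

lemma minus_one_in_Qset:
  assumes "(2::'a::{field,finite}) \<noteq> 0" and "4 dvd CARD('a) - 1"
  shows "(-1::'a) \<in> Qset"
proof -
  have "even ((CARD('a) - 1) div 2)" using assms(2) by auto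
  then show ?thesis unfolding Qset_euler_criterion[OF assms(1)] by simp
qed

section \<open>Zeros of the trace of a square over a field of order 9 ^ k, k odd\<close>

definition frob_fixed :: "nat \<Rightarrow> 'a::comm_ring_1 set" where
  "frob_fixed k = {x. x ^ 3 ^ k = x}"

lemma frob_fixed_add:
  fixes x y :: "'a::comm_ring_1"
  assumes "(3::'a) = 0" and "x \<in> frob_fixed k" and "y \<in> frob_fixed k"
  shows "x + y \<in> frob_fixed k"
  using assms char3_frobenius_add[of x y k] unfolding frob_fixed_def by simp

lemma frob_fixed_uminus: "x \<in> frob_fixed k \<Longrightarrow> - x \<in> frob_fixed k"
  unfolding frob_fixed_def by (simp add: power_minus_odd)

lemma frob_fixed_diff:
  fixes x y :: "'a::comm_ring_1"
  assumes "(3::'a) = 0" and "x \<in> frob_fixed k" and "y \<in> frob_fixed k"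
  shows "x - y \<in> frob_fixed k"
  using frob_fixed_add[OF assms(1,2) frob_fixed_uminus[OF assms(3)]] by simp

lemma frob_fixed_mult: "x \<in> frob_fixed k \<Longrightarrow> y \<in> frob_fixed k \<Longrightarrow> x * y \<in> frob_fixed k"
  unfolding frob_fixed_def by (simp add: power_mult_distrib)

lemma frob_fixed_divide:
  "x \<in> frob_fixed k \<Longrightarrow> y \<in> frob_fixed k \<Longrightarrow> x / y \<in> (frob_fixed k :: 'a::field set)"
  unfolding frob_fixed_def by (simp add: power_divide)

lemma tr_add_length: "tr (k + n) z = tr k z + tr n (z ^ 3 ^ k)"
  unfolding tr_def by (induction n) (simp_all add: power_add power_mult)

lemma tr_double_frob_fixed: "z \<in> frob_fixed k \<Longrightarrow> tr (2 * k) z = 2 * tr k z"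
  unfolding frob_fixed_def mult_2 tr_add_length by simp

lemma tr_double_frob_anti_fixed: "z ^ 3 ^ k = - z \<Longrightarrow> tr (2 * k) z = 0"
  unfolding mult_2 tr_add_length by (simp add: tr_uminus)

lemma card_tr_mult_eq_zero:
  fixes K :: "'a::field set"
  assumes "(3::'a) = 0" and "finite K" and "n \<ge> 1"
    and add_closed: "\<And>x y. x \<in> K \<Longrightarrow> y \<in> K \<Longrightarrow> x + y \<in> K"
    and uminus_closed: "\<And>x. x \<in> K \<Longrightarrow> - x \<in> K"
    and mult_closed: "\<And>x y. x \<in> K \<Longrightarrow> y \<in> K \<Longrightarrow> x * y \<in> K"
    and divide_closed: "\<And>x y. x \<in> K \<Longrightarrow> y \<in> K \<Longrightarrow> x / y \<in> K"
    and "\<And>z. z \<in> K \<Longrightarrow> z ^ 3 ^ n = z" and card: "card K = 3 ^ n" and "0 \<in> K"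
  shows "card {(s, t) \<in> K \<times> K. tr n (s * t) = 0} = 3 ^ n + (3 ^ n - 1) * 3 ^ (n - 1)"
proof -
  have kernel: "card {z\<in>K. tr n z = 0} = 3 ^ (n - 1)"
    by (rule card_tr_kernel) (use assms in auto)
  have fiber: "card {t\<in>K. tr n (s * t) = 0} = 3 ^ (n - 1)" if "s \<in> K" "s \<noteq> 0" for s
  proof -
    have "bij_betw ((*) s) {t\<in>K. tr n (s * t) = 0} {z\<in>K. tr n z = 0}"
      by (rule bij_betw_byWitness[of _ "\<lambda>z. z / s"]) (use that mult_closed divide_closed in auto)
    then show ?thesis using kernel by (simp add: bij_betw_same_card)
  qed
  have "{(s, t) \<in> K \<times> K. tr n (s * t) = 0} = (SIGMA s:K. {t\<in>K. tr n (s * t) = 0})" by auto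
  then have "card {(s, t) \<in> K \<times> K. tr n (s * t) = 0} = (\<Sum>s\<in>K. card {t\<in>K. tr n (s * t) = 0})"
    using \<open>finite K\<close> by (simp add: card_SigmaI)
  also have "\<dots> = card {t\<in>K. tr n (0 * t) = 0} + (\<Sum>s\<in>K - {0}. card {t\<in>K. tr n (s * t) = 0})"
    using \<open>finite K\<close> \<open>0 \<in> K\<close> by (rule sum.remove)
  also have "\<dots> = 3 ^ n + (3 ^ n - 1) * 3 ^ (n - 1)"
    using fiber card \<open>0 \<in> K\<close> by (simp add: card_Diff_singleton)
  finally show ?thesis .
qed

lemma nine_power_mod_four: "(9::nat) ^ j mod 4 = 1"
  using power_mod[of "9::nat" 4 j] by simp

lemma sqrt_minus_one_frob_anti_fixed:
  assumes "CARD('a::{field,finite}) = 3 ^ (2 * k)" and "odd k"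
  shows "\<exists>i::'a. i\<^sup>2 = -1 \<and> i ^ 3 ^ k = - i"
proof -
  have "(2::'a) \<noteq> 0" using char3_two_ne_zero char3_of_card[OF assms(1)] by blast
  moreover have "CARD('a) mod 4 = 1"
    using assms(1) nine_power_mod_four[of k] by (simp add: power_mult)
  then have "4 dvd CARD('a) - 1" using dvd_minus_mod[of 4 "CARD('a)"] by simp
  ultimately obtain i :: 'a where i: "i\<^sup>2 = -1"
    using minus_one_in_Qset unfolding Qset_def by force
  \<comment> \<open>the theorem needs \<open>m mod 4 = 2\<close> only here: for odd \<open>k\<close>, \<open>3 ^ k mod 4 = 3\<close>\<close>
  obtain j where "k = 2 * j + 1" using \<open>odd k\<close> by (rule oddE)
  then have "(3::nat) ^ k = 3 * 9 ^ j" by (simp add: power_mult)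
  then have "(3::nat) ^ k mod 4 = 3"
    using mod_mult_right_eq[of "3::nat" "9 ^ j" 4] nine_power_mod_four[of j] by simp
  then have "(3::nat) ^ k = 4 * (3 ^ k div 4) + 3" by presburger
  then have "i ^ 3 ^ k = (i ^ 4) ^ (3 ^ k div 4) * i ^ 3"
    by (metis power_add power_mult)
  also have "i ^ 4 = (i\<^sup>2)\<^sup>2" by (simp flip: power_mult)
  also have "i ^ 3 = i\<^sup>2 * i" by (simp add: power2_eq_square power3_eq_cube)
  also have "((i\<^sup>2)\<^sup>2) ^ (3 ^ k div 4) * (i\<^sup>2 * i) = - i"
    using i by simp
  finally show ?thesis using i by auto
qed

context
  fixes k :: nat and i :: "'a::{field,finite}"
  assumes card: "CARD('a) = 3 ^ (2 * k)"
    and i_square: "i\<^sup>2 = -1" and i_anti_fixed: "i ^ 3 ^ k = - i"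
begin

private lemma char3: "(3::'a) = 0"
  by (rule char3_of_card[OF card])

private lemma frob_add: "(x + y) ^ 3 ^ k = x ^ 3 ^ k + (y::'a) ^ 3 ^ k"
  by (rule char3_frobenius_add[OF char3])

private lemma frob_involution: "(x ^ 3 ^ k) ^ 3 ^ k = (x::'a)"
  using finite_field_power_card[of x] card by (simp flip: power_mult power_add add: mult_2)

private lemma frob_pair:
  "(u::'a) \<in> frob_fixed k \<Longrightarrow> (w::'a) \<in> frob_fixed k \<Longrightarrow> (u + i * w) ^ 3 ^ k = u - i * w"
  unfolding frob_fixed_def by (simp add: frob_add power_mult_distrib i_anti_fixed)

text \<open>
  The inverse is \<open>y \<mapsto> ((y + \<sigma> y) / 2, (y - \<sigma> y) / (2 i))\<close> with \<open>\<sigma> y = y ^ 3 ^ k\<close>,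
  written using \<open>1 / 2 = -1\<close> and \<open>1 / (2 i) = i\<close> in characteristic 3.
\<close>
lemma bij_betw_frob_fixed_pair:
  "bij_betw (\<lambda>(u, w). u + i * w) (frob_fixed k \<times> frob_fixed k) UNIV"
proof (rule bij_betw_byWitness[where f' = "\<lambda>y. (- (y + y ^ 3 ^ k), i * (y - y ^ 3 ^ k))"])
  have two: "(2::'a) = -1" by (rule char3_two_eq[OF char3])
  have i_i: "i * i = -1" using i_square by (simp add: power2_eq_square)
  show "\<forall>p\<in>frob_fixed k \<times> frob_fixed k.
      (\<lambda>y. (- (y + y ^ 3 ^ k), i * (y - y ^ 3 ^ k))) ((\<lambda>(u, w). u + i * w) p) = p"
  proof
    fix p :: "'a \<times> 'a" assume "p \<in> frob_fixed k \<times> frob_fixed k"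
    then obtain u w where p: "p = (u, w)" "u \<in> frob_fixed k" "w \<in> frob_fixed k" by blast
    then have "- (u + i * w + (u + i * w) ^ 3 ^ k) = - (2 * u)"
      and "i * (u + i * w - (u + i * w) ^ 3 ^ k) = 2 * (i * i) * w"
      by (simp_all add: frob_pair algebra_simps)
    then show "(\<lambda>y. (- (y + y ^ 3 ^ k), i * (y - y ^ 3 ^ k))) ((\<lambda>(u, w). u + i * w) p) = p"
      by (simp add: p(1) two i_i)
  qed
  show "\<forall>y\<in>UNIV. (\<lambda>(u, w). u + i * w) (- (y + y ^ 3 ^ k), i * (y - y ^ 3 ^ k)) = y"
  proof
    fix y :: 'a
    have "- (y + y ^ 3 ^ k) + i * (i * (y - y ^ 3 ^ k)) = - (2 * y)"
      using i_i by (simp add: algebra_simps mult.assoc[symmetric])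
    then show "(\<lambda>(u, w). u + i * w) (- (y + y ^ 3 ^ k), i * (y - y ^ 3 ^ k)) = y"
      by (simp add: two)
  qed
  show "(\<lambda>y. (- (y + y ^ 3 ^ k), i * (y - y ^ 3 ^ k))) ` UNIV \<subseteq> frob_fixed k \<times> frob_fixed k"
  proof
    fix p assume "p \<in> (\<lambda>y. (- (y + y ^ 3 ^ k), i * (y - y ^ 3 ^ k))) ` UNIV"
    then obtain y where p: "p = (- (y + y ^ 3 ^ k), i * (y - y ^ 3 ^ k))" by blast
    have "(y - y ^ 3 ^ k) ^ 3 ^ k = y ^ 3 ^ k - y"
      using frob_add[of y "- (y ^ 3 ^ k)"] by (simp add: power_minus_odd frob_involution)
    then have "(i * (y - y ^ 3 ^ k)) ^ 3 ^ k = i * (y - y ^ 3 ^ k)"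
      by (simp only: power_mult_distrib i_anti_fixed) (simp add: algebra_simps)
    then have "i * (y - y ^ 3 ^ k) \<in> frob_fixed k" unfolding frob_fixed_def by simp
    moreover have "y + y ^ 3 ^ k \<in> frob_fixed k"
      unfolding frob_fixed_def by (simp add: frob_add frob_involution)
    ultimately show "p \<in> frob_fixed k \<times> frob_fixed k" unfolding p by (blast intro: frob_fixed_uminus)
  qed
qed simp

lemma card_frob_fixed: "card (frob_fixed k :: 'a set) = 3 ^ k"
proof -
  have "card (frob_fixed k :: 'a set) ^ 2 = 3 ^ k * 3 ^ k"
    using bij_betw_same_card[OF bij_betw_frob_fixed_pair] card
    by (simp add: card_cartesian_product power2_eq_square power_add mult_2)
  then show ?thesis
    by (metis power2_eq_square power2_eq_imp_eq zero_le)
qed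

lemma tr_square_frob_fixed_pair:
  assumes "u \<in> frob_fixed k" and "w \<in> frob_fixed k"
  shows "tr (2 * k) ((u + i * w)\<^sup>2) = - tr k ((u - w) * (u + w))"
proof -
  have two: "(2::'a) = -1" by (rule char3_two_eq[OF char3])
  have "(u + i * w)\<^sup>2 = u * u + 2 * (i * (u * w)) + i\<^sup>2 * (w * w)"
    by (simp add: power2_eq_square algebra_simps)
  also have "\<dots> = (u - w) * (u + w) + - (i * (u * w))"
    by (simp add: i_square two algebra_simps)
  finally have "(u + i * w)\<^sup>2 = (u - w) * (u + w) + - (i * (u * w))" .
  moreover have "(u - w) * (u + w) \<in> frob_fixed k"
    using assms by (simp add: frob_fixed_mult frob_fixed_add frob_fixed_diff char3)
  moreover have "(i * (u * w)) ^ 3 ^ k = - (i * (u * w))"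
    using assms unfolding frob_fixed_def by (simp add: power_mult_distrib i_anti_fixed)
  ultimately show ?thesis
    by (simp add: tr_diff[OF char3] tr_double_frob_fixed tr_double_frob_anti_fixed two)
qed

end

lemma bij_betw_diff_add_frob_fixed:
  assumes "(3::'a::comm_ring_1) = 0"
  shows "bij_betw (\<lambda>(u, w). (u - w, u + w))
    (frob_fixed k \<times> frob_fixed k :: ('a \<times> 'a) set) (frob_fixed k \<times> frob_fixed k)"
proof -
  have "(2::'a) = -1" by (rule char3_two_eq[OF assms])
  then have cancel: "- (a + a) = a" for a :: 'a by (simp flip: mult_2)
  \<comment> \<open>the inverse \<open>(s, t) \<mapsto> ((s + t) / 2, (t - s) / 2)\<close>, written with \<open>1 / 2 = -1\<close>\<close>
  show ?thesis
    by (rule bij_betw_byWitness[where f' = "\<lambda>(s, t). (- (s + t), s - t)"])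
      (use cancel in \<open>auto simp: algebra_simps
        intro: frob_fixed_add[OF assms] frob_fixed_diff[OF assms] frob_fixed_uminus\<close>)
qed

lemma card_tr_square_eq_zero:
  assumes card: "CARD('a::{field,finite}) = 3 ^ (2 * k)" and "odd k"
  shows "card {y::'a. tr (2 * k) (y\<^sup>2) = 0} = 3 ^ k + (3 ^ k - 1) * 3 ^ (k - 1)"
proof -
  have char3: "(3::'a) = 0" by (rule char3_of_card[OF card])
  obtain i :: 'a where i: "i\<^sup>2 = -1" "i ^ 3 ^ k = - i"
    using sqrt_minus_one_frob_anti_fixed[OF assms] by blast
  let ?K = "frob_fixed k :: 'a set"
  have "card {y::'a. tr (2 * k) (y\<^sup>2) = 0} = card {y\<in>UNIV. tr (2 * k) (y\<^sup>2) = (0::'a)}"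
    by simp
  also have "\<dots> = card {p\<in>?K \<times> ?K. tr (2 * k) (((\<lambda>(u, w). u + i * w) p)\<^sup>2) = 0}"
    by (rule card_Collect_bij_betw[OF bij_betw_frob_fixed_pair[OF card i], symmetric])
  also have "\<dots> = card {(u, w)\<in>?K \<times> ?K. tr k ((u - w) * (u + w)) = 0}"
    using tr_square_frob_fixed_pair[OF card i] by (intro arg_cong[where f = card]) auto
  also have "\<dots> = card {p\<in>?K \<times> ?K. (\<lambda>(s, t). tr k (s * t) = 0) ((\<lambda>(u, w). (u - w, u + w)) p)}"
    by (intro arg_cong[where f = card]) auto
  also have "\<dots> = card {(s, t)\<in>?K \<times> ?K. tr k (s * t) = 0}"
    by (subst card_Collect_bij_betw[OF bij_betw_diff_add_frob_fixed[OF char3]])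
      (rule arg_cong[where f = card], auto)
  also have "\<dots> = 3 ^ k + (3 ^ k - 1) * 3 ^ (k - 1)"
  proof (rule card_tr_mult_eq_zero[OF char3])
    show "1 \<le> k" using \<open>odd k\<close> by (cases k) auto
  qed (auto simp: card_frob_fixed[OF card i] frob_fixed_add[OF char3] frob_fixed_uminus
      frob_fixed_mult frob_fixed_divide, auto simp: frob_fixed_def)
  finally show ?thesis .
qed

lemma card_Qset_tr_nonzero:
  assumes card: "CARD('a::{field,finite}) = 3 ^ (2 * k)" and "odd k"
  shows "card {x\<in>(Qset::'a set). tr (2 * k) x \<noteq> 0} = (3 ^ k - 1) * 3 ^ (k - 1)"
proof -
  define A where "A = card {x\<in>(Qset::'a set). tr (2 * k) x \<noteq> 0}"
  define s :: nat where "s = 3 ^ (k - 1)"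
  have k: "k = Suc (k - 1)" using \<open>odd k\<close> by (cases k) auto
  then have s3: "(3::nat) ^ k = 3 * s" unfolding s_def by (metis power_Suc)
  have "s \<ge> 1" unfolding s_def by simp
  have two: "(2::'a) \<noteq> 0" by (rule char3_two_ne_zero[OF char3_of_card[OF card]])
  let ?Z = "{y::'a. tr (2 * k) (y\<^sup>2) = 0}"
  have "{y::'a. y \<noteq> 0 \<and> tr (2 * k) (y\<^sup>2) \<noteq> 0} = UNIV - ?Z" by (auto simp: power_0_left)
  moreover have "card ?Z \<le> CARD('a)" by (rule card_mono) auto
  ultimately have "2 * A + card ?Z = CARD('a)"
    using card_nonzero_square_preimage[OF two, of "\<lambda>x. tr (2 * k) x \<noteq> 0"] unfolding A_def
    by (simp add: card_Diff_subset)
  moreover have "CARD('a) = 3 * s * (3 * s)"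
    unfolding card mult_2 power_add s3 ..
  ultimately have count: "2 * A + (3 * s + (3 * s - 1) * s) = 3 * s * (3 * s)"
    using card_tr_square_eq_zero[OF assms] s3 unfolding s_def by simp
  have "2 * int A + (3 * int s + (3 * int s - 1) * int s) = 3 * int s * (3 * int s)"
    using arg_cong[OF count, of int] \<open>s \<ge> 1\<close> by (simp add: of_nat_diff)
  then have "int A = (3 * int s - 1) * int s" by (simp add: algebra_simps)
  moreover have "int ((3 * s - 1) * s) = (3 * int s - 1) * int s"
    using \<open>s \<ge> 1\<close> by (simp add: of_nat_diff)
  ultimately show ?thesis unfolding A_def s3 s_def[symmetric] by (metis of_nat_eq_iff)
qed

lemma card_Nset_tr_nonzero:
  assumes card: "CARD('a::{field,finite}) = 3 ^ (2 * k)" and "odd k"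
  shows "card {x\<in>(Nset::'a set). tr (2 * k) x \<noteq> 0} = (3 ^ k + 1) * 3 ^ (k - 1)"
proof -
  define s :: nat where "s = 3 ^ (k - 1)"
  have k: "k = Suc (k - 1)" using \<open>odd k\<close> by (cases k) auto
  then have s3: "(3::nat) ^ k = 3 * s" unfolding s_def by (metis power_Suc)
  have "s \<ge> 1" unfolding s_def by simp
  have "{z::'a. tr (2 * k) z \<noteq> 0} = {x\<in>Qset. tr (2 * k) x \<noteq> 0} \<union> {x\<in>Nset. tr (2 * k) x \<noteq> 0}"
  proof -
    have "z \<in> Qset \<union> Nset" if "tr (2 * k) z \<noteq> (0::'a)" for z
      using that Qset_Nset_partition(1) by (cases "z = 0") auto
    then show ?thesis by blast
  qed
  then have "card {z::'a. tr (2 * k) z \<noteq> 0}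
      = card {x\<in>(Qset::'a set). tr (2 * k) x \<noteq> 0} + card {x\<in>(Nset::'a set). tr (2 * k) x \<noteq> 0}"
    using Qset_Nset_partition(2) by (simp only:) (rule card_Un_disjoint, auto)
  moreover have "card {z::'a. tr (2 * k) z \<noteq> 0} = 2 * (3 * s * s)"
  proof -
    have "2 * k - 1 = k + (k - 1)" using k by arith
    then have "(3::nat) ^ (2 * k - 1) = 3 * s * s" unfolding s_def by (simp add: power_add s3[unfolded s_def])
    then show ?thesis using card_tr_nonzero[OF card] k by simp
  qed
  ultimately have count: "(3 * s - 1) * s + card {x\<in>(Nset::'a set). tr (2 * k) x \<noteq> 0} = 2 * (3 * s * s)"
    using card_Qset_tr_nonzero[OF assms] s3 unfolding s_def by simp
  have "(3 * int s - 1) * int s + int (card {x\<in>(Nset::'a set). tr (2 * k) x \<noteq> 0}) = 2 * (3 * int s * int s)"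
    using arg_cong[OF count, of int] \<open>s \<ge> 1\<close> by (simp add: of_nat_diff)
  then have "int (card {x\<in>(Nset::'a set). tr (2 * k) x \<noteq> 0}) = int ((3 * s + 1) * s)"
    by (simp add: algebra_simps)
  then show ?thesis unfolding s3 s_def[symmetric] by (metis of_nat_eq_iff)
qed

lemma card_tr_mult_Qset:
  fixes c :: "'a::field"
  assumes "c \<in> Qset"
  shows "card {x\<in>Qset. tr m (c * x) \<noteq> 0} = card {x\<in>(Qset::'a set). tr m x \<noteq> 0}"
proof -
  have "c \<noteq> 0" using assms unfolding Qset_def by simp
  then have "bij_betw ((*) c) Qset Qset"
    by (intro bij_betw_byWitness[of _ "\<lambda>y. y / c"]) (auto intro: Qset_mult Qset_divide assms)
  then show ?thesis by (rule card_Collect_bij_betw)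
qed

lemma card_tr_mult_Nset:
  fixes c :: "'a::{field,finite}"
  assumes "(2::'a) \<noteq> 0" and "c \<in> Nset"
  shows "card {x\<in>Qset. tr m (c * x) \<noteq> 0} = card {x\<in>(Nset::'a set). tr m x \<noteq> 0}"
proof -
  have "c \<noteq> 0" using assms(2) Qset_Nset_partition(3) by auto
  then have "bij_betw ((*) c) Qset Nset"
    unfolding bij_betw_def using image_mult_Qset_eq_Nset[OF assms] by (simp add: inj_on_def)
  then show ?thesis by (rule card_Collect_bij_betw)
qed

section \<open>Lee weights of the codewords\<close>

lemma elem_eq: "elem x1 x2 x3 = (x1 - x2 + x3, x2 - 2 * x3, x3 :: 'a::comm_ring_1)"
  unfolding elem_def radd_def rmul_def rconst_def um1sq_def um1_def by (simp add: algebra_simps)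

lemma inj_elem: "inj (\<lambda>(x1, x2, x3). elem x1 x2 (x3 :: 'a::comm_ring_1))"
  by (rule injI) (auto simp: elem_eq)

lemma Lprime_eq_image_elem:
  "(Lprime :: 'a::field R3 set) = (\<lambda>(x1, x2, x3). elem x1 x2 x3) ` (Qset \<times> UNIV \<times> UNIV)"
proof
  show "(Lprime :: 'a R3 set) \<subseteq> (\<lambda>(x1, x2, x3). elem x1 x2 x3) ` (Qset \<times> UNIV \<times> UNIV)"
  proof
    fix y :: "'a R3" assume "y \<in> Lprime"
    then obtain x1 x2 x3 where "y = elem x1 x2 x3" "x1 \<in> Qset" unfolding Lprime_def by blast
    then show "y \<in> (\<lambda>(x1, x2, x3). elem x1 x2 x3) ` (Qset \<times> UNIV \<times> UNIV)"
      by (intro rev_image_eqI[of "(x1, x2, x3)"]) auto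
  qed
qed (auto simp: Lprime_def)

definition tr_linear_support :: "nat \<Rightarrow> 'a::field \<Rightarrow> 'a \<Rightarrow> 'a \<Rightarrow> nat" where
  "tr_linear_support m c1 c2 c3 =
     card {(x1, x2, x3) \<in> Qset \<times> UNIV \<times> UNIV. tr m (c1 * x1 + c2 * x2 + c3 * x3) \<noteq> 0}"

lemma wL_ev_eq_tr_linear_support:
  fixes p q r :: "'a::{field,finite}"
  assumes "(3::'a) = 0"
  shows "wL_ev m (p, q, r) = tr_linear_support m p (r - p) (p + q + r)
    + tr_linear_support m q (p - q) (p + q + r) + tr_linear_support m r (q - r) (p + q + r)"
proof -
  let ?D = "Qset \<times> UNIV \<times> (UNIV :: 'a set)"
  have product: "rmul (p, q, r) (elem x1 x2 x3) =
      (p * x1 + (r - p) * x2 + (p + q + r) * x3, q * x1 + (p - q) * x2 + (p + q + r) * x3,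
       r * x1 + (q - r) * x2 + (p + q + r) * x3)" for x1 x2 x3
    using char3_two_eq[OF assms] unfolding elem_eq rmul_def by (simp add: algebra_simps)
  let ?E = "\<lambda>(x1, x2, x3). elem x1 x2 (x3 :: 'a)"
  have "wL_ev m (p, q, r) = (\<Sum>t\<in>?D. lee_wt (Tr m (rmul (p, q, r) (?E t))))"
    unfolding wL_ev_def Lprime_eq_image_elem
    by (rule sum.reindex[unfolded comp_def]) (rule inj_on_subset[OF inj_elem], simp)
  also have "\<dots> = (\<Sum>(x1, x2, x3)\<in>?D. of_bool (tr m (p * x1 + (r - p) * x2 + (p + q + r) * x3) \<noteq> 0)
      + of_bool (tr m (q * x1 + (p - q) * x2 + (p + q + r) * x3) \<noteq> 0)
      + of_bool (tr m (r * x1 + (q - r) * x2 + (p + q + r) * x3) \<noteq> 0))"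
    by (intro sum.cong) (auto simp: product lee_wt_def Tr_def)
  also have "\<dots> = tr_linear_support m p (r - p) (p + q + r)
      + tr_linear_support m q (p - q) (p + q + r) + tr_linear_support m r (q - r) (p + q + r)"
    unfolding tr_linear_support_def case_prod_unfold sum.distrib
    by (simp add: Int_def Collect_conj_eq[symmetric] conj_commute)
  finally show ?thesis .
qed

lemma card_affine_pair_preimage:
  fixes c2 c3 :: "'a::{field,finite}"
  assumes "c2 \<noteq> 0 \<or> c3 \<noteq> 0"
  shows "card {(x2, x3). P (b + c2 * x2 + c3 * x3)} = CARD('a) * card {z. P z}"
proof -
  have "bij_betw (\<lambda>(x2, x3). if c3 \<noteq> 0 then (x2, b + c2 * x2 + c3 * x3) else (x3, b + c2 * x2))
      {(x2, x3). P (b + c2 * x2 + c3 * x3)} (UNIV \<times> {z. P z})"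
  proof (rule bij_betw_byWitness[where f' = "\<lambda>(x, z).
      if c3 \<noteq> 0 then (x, (z - b - c2 * x) / c3) else ((z - b) / c2, x)"])
  qed (use assms in \<open>auto simp: field_simps split: if_splits\<close>)
  then show ?thesis by (simp add: bij_betw_same_card card_cartesian_product)
qed

lemma tr_linear_support_nondegenerate:
  fixes c1 c2 c3 :: "'a::{field,finite}"
  assumes "c2 \<noteq> 0 \<or> c3 \<noteq> 0"
  shows "tr_linear_support m c1 c2 c3 = card (Qset::'a set) * CARD('a) * card {z::'a. tr m z \<noteq> 0}"
proof -
  have "{(x1, x2, x3) \<in> Qset \<times> UNIV \<times> UNIV. tr m (c1 * x1 + c2 * x2 + c3 * x3) \<noteq> 0}
      = (SIGMA x1:Qset. {(x2, x3). tr m (c1 * x1 + c2 * x2 + c3 * x3) \<noteq> 0})"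
    by auto
  moreover have "card {(x2, x3). tr m (c1 * x1 + c2 * x2 + c3 * x3) \<noteq> 0} = CARD('a) * card {z::'a. tr m z \<noteq> 0}"
    for x1
    using card_affine_pair_preimage[OF assms, of "\<lambda>z. tr m z \<noteq> 0" "c1 * x1"] by simp
  ultimately show ?thesis
    unfolding tr_linear_support_def by (simp add: card_SigmaI)
qed

lemma tr_linear_support_degenerate:
  "tr_linear_support m c 0 0 = CARD('a) * CARD('a) * card {x\<in>Qset. tr m (c * x) \<noteq> 0}"
  for c :: "'a::{field,finite}"
proof -
  have "{(x1, x2, x3) \<in> Qset \<times> UNIV \<times> UNIV. tr m (c * x1 + 0 * x2 + 0 * x3) \<noteq> 0}
      = {x\<in>Qset. tr m (c * x) \<noteq> 0} \<times> (UNIV :: 'a set) \<times> (UNIV :: 'a set)"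
    by auto
  then show ?thesis
    unfolding tr_linear_support_def by (simp add: card_cartesian_product)
qed

lemma rmul_um1sq_rconst:
  "(3::'a::comm_ring_1) = 0 \<Longrightarrow> rmul um1sq (rconst c) = (c, c, c :: 'a)"
  unfolding um1sq_def um1_def rmul_def rconst_def by (simp add: char3_two_eq)

lemma wL_ev_zero: "wL_ev m ((0, 0, 0) :: 'a::field R3) = 0"
proof -
  have "lee_wt (Tr m (rmul (0, 0, 0) x)) = 0" for x :: "'a R3"
    by (cases x) (simp add: rmul_def Tr_def lee_wt_def)
  then show ?thesis unfolding wL_ev_def by simp
qed

lemma wL_ev_diagonal:
  fixes c :: "'a::{field,finite}"
  assumes "(3::'a) = 0"
  shows "wL_ev m (c, c, c) = 3 * (CARD('a) * CARD('a) * card {x\<in>Qset. tr m (c * x) \<noteq> 0})"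
proof -
  have "c + c = - c" using char3_two_eq[OF assms] by (metis mult_2 mult_minus1)
  then have "c + c + c = 0" by simp
  show ?thesis
    unfolding wL_ev_eq_tr_linear_support[OF assms] diff_self \<open>c + c + c = 0\<close>
      tr_linear_support_degenerate by simp
qed

lemma wL_ev_outside_ideal:
  fixes a :: "'a::{field,finite} R3"
  assumes "(3::'a) = 0" and "a \<notin> ideal_um1sq"
  shows "wL_ev m a = 3 * (card (Qset::'a set) * CARD('a) * card {z::'a. tr m z \<noteq> 0})"
proof -
  obtain p q r where a: "a = (p, q, r)" by (cases a)
  have "\<not> (p = q \<and> q = r)"
    using assms unfolding a ideal_um1sq_def by (auto simp: rmul_um1sq_rconst)
  moreover have "p = q \<and> q = r" if sum: "p + q + r = 0" and "r = p \<or> p = q \<or> q = r"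
  proof -
    from that(2) consider "r = p" | "p = q" | "q = r" by blast
    then show ?thesis
    proof cases
      case 1
      with sum have "p + p + q = 0" by (simp add: ac_simps)
      then have "q = p" by (rule char3_double_add_eq_zero[OF assms(1)])
      with 1 show ?thesis by simp
    next
      case 2
      with sum have "q + q + r = 0" by (simp add: ac_simps)
      then have "r = q" by (rule char3_double_add_eq_zero[OF assms(1)])
      with 2 show ?thesis by simp
    next
      case 3
      with sum have "r + r + p = 0" by (simp add: ac_simps)
      then have "p = r" by (rule char3_double_add_eq_zero[OF assms(1)])
      with 3 show ?thesis by simp
    qed
  qed
  ultimately have "r - p \<noteq> 0 \<or> p + q + r \<noteq> 0" and "p - q \<noteq> 0 \<or> p + q + r \<noteq> 0"
    and "q - r \<noteq> 0 \<or> p + q + r \<noteq> 0"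
    by auto
  then show ?thesis
    unfolding a wL_ev_eq_tr_linear_support[OF assms(1)] by (simp add: tr_linear_support_nondegenerate)
qed

lemma wL_ev_Qset_value:
  fixes c :: "'a::{field,finite}"
  assumes card: "CARD('a) = 3 ^ (2 * k)" and "odd k" and "c \<in> Qset"
  shows "int (wL_ev (2 * k) (c, c, c)) = 3 ^ (6 * k) - 3 ^ (5 * k)"
proof -
  define x :: nat where "x = 3 ^ k"
  have "k = Suc (k - 1)" using \<open>odd k\<close> by (cases k) auto
  then have x: "3 * 3 ^ (k - 1) = x" "x \<ge> 1" unfolding x_def by (metis power_Suc, simp)
  have "CARD('a) = x * x" unfolding card mult_2 power_add x_def ..
  then have "wL_ev (2 * k) (c, c, c) = 3 * (x * x * (x * x) * ((x - 1) * 3 ^ (k - 1)))"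
    using wL_ev_diagonal[OF char3_of_card[OF card], of "2 * k" c]
    by (simp add: card_tr_mult_Qset[OF assms(3)] card_Qset_tr_nonzero[OF card \<open>odd k\<close>] x_def)
  also have "\<dots> = x * x * (x * x) * ((x - 1) * x)"
    unfolding x(1)[symmetric] by (simp only: ac_simps)
  finally have "int (wL_ev (2 * k) (c, c, c)) = int x * int x * (int x * int x) * ((int x - 1) * int x)"
    using x(2) by (simp add: of_nat_diff)
  also have "\<dots> = int x ^ 6 - int x ^ 5" by algebra
  finally show ?thesis unfolding x_def by (simp flip: power_mult add: mult.commute)
qed

lemma wL_ev_Nset_value:
  fixes c :: "'a::{field,finite}"
  assumes card: "CARD('a) = 3 ^ (2 * k)" and "odd k" and "c \<in> Nset"
  shows "int (wL_ev (2 * k) (c, c, c)) = 3 ^ (6 * k) + 3 ^ (5 * k)"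
proof -
  define x :: nat where "x = 3 ^ k"
  have "k = Suc (k - 1)" using \<open>odd k\<close> by (cases k) auto
  then have x: "3 * 3 ^ (k - 1) = x" unfolding x_def by (metis power_Suc)
  have char3: "(3::'a) = 0" by (rule char3_of_card[OF card])
  have "CARD('a) = x * x" unfolding card mult_2 power_add x_def ..
  then have "wL_ev (2 * k) (c, c, c) = 3 * (x * x * (x * x) * ((x + 1) * 3 ^ (k - 1)))"
    using wL_ev_diagonal[OF char3, of "2 * k" c]
    by (simp add: card_tr_mult_Nset[OF char3_two_ne_zero[OF char3] assms(3)]
        card_Nset_tr_nonzero[OF card \<open>odd k\<close>] x_def)
  also have "\<dots> = x * x * (x * x) * ((x + 1) * x)"
    unfolding x[symmetric] by (simp only: ac_simps)
  finally have "int (wL_ev (2 * k) (c, c, c)) = int x * int x * (int x * int x) * ((int x + 1) * int x)"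
    by (simp only: of_nat_mult of_nat_add of_nat_1)
  also have "\<dots> = int x ^ 6 + int x ^ 5" by algebra
  finally show ?thesis unfolding x_def by (simp flip: power_mult add: mult.commute)
qed


lemma wL_ev_outside_ideal_value:
  fixes a :: "'a::{field,finite} R3"
  assumes card: "CARD('a) = 3 ^ m" and "m \<ge> 1" and "a \<notin> ideal_um1sq"
  shows "int (wL_ev m a) = 3 ^ (3 * m) - 3 ^ (2 * m)"
proof -
  define q :: nat where "q = 3 ^ m"
  have char3: "(3::'a) = 0" by (rule char3_of_card[OF card])
  have Q: "2 * card (Qset::'a set) = q - 1"
    using card_Qset[OF char3_two_ne_zero[OF char3]] card unfolding q_def by simp
  have "m = Suc (m - 1)" using \<open>m \<ge> 1\<close> by simp
  then have "3 * 3 ^ (m - 1) = q" unfolding q_def by (metis power_Suc)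
  then have T: "3 * card {z::'a. tr m z \<noteq> 0} = 2 * q"
    using card_tr_nonzero[OF card \<open>m \<ge> 1\<close>] by simp
  have "2 * wL_ev m a = (2 * card (Qset::'a set)) * q * (3 * card {z::'a. tr m z \<noteq> 0})"
    using wL_ev_outside_ideal[OF char3 assms(3)] card unfolding q_def by (simp only: ac_simps)
  also have "\<dots> = 2 * ((q - 1) * q * q)" unfolding Q T by (simp only: ac_simps)
  finally have "wL_ev m a = (q - 1) * q * q" by simp
  moreover have "q \<ge> 1" unfolding q_def by simp
  ultimately have "int (wL_ev m a) = (int q - 1) * int q * int q" by (simp add: of_nat_diff)
  also have "\<dots> = int q ^ 3 - int q ^ 2" by algebra
  finally show ?thesis unfolding q_def by (simp flip: power_mult add: mult.commute)
qed

theorem theorem5p2: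
  fixes m :: nat and a :: "'a::{field,finite} R3"
  assumes "card (UNIV :: 'a set) = 3 ^ m"
    and "m mod 4 = 2"
  shows "(a = (0,0,0) \<longrightarrow> wL_ev m a = 0)
    \<and> (\<forall>a3. a = rmul um1sq (rconst a3) \<longrightarrow>
          (a3 \<in> Qset \<longrightarrow> int (wL_ev m a) = 3 ^ (3*m) - 3 ^ (5*m div 2))
        \<and> (a3 \<in> Nset \<longrightarrow> int (wL_ev m a) = 3 ^ (3*m) + 3 ^ (5*m div 2)))
    \<and> (a \<notin> ideal_um1sq \<longrightarrow> int (wL_ev m a) = 3 ^ (3*m) - 3 ^ (2*m))"
proof -
  define k where "k = m div 2"
  have m: "m = 2 * k" and "odd k" and "m \<ge> 1" unfolding k_def using assms(2) by presburger+
  have card: "CARD('a) = 3 ^ (2 * k)" using assms(1) m by simp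
  have exponents: "3 * m = 6 * k" "5 * m div 2 = 5 * k" using m by simp_all
  have diagonal: "rmul um1sq (rconst a3) = (a3, a3, a3)" for a3 :: 'a
    by (rule rmul_um1sq_rconst[OF char3_of_card[OF card]])
  show ?thesis
    using wL_ev_zero[of m] wL_ev_outside_ideal_value[OF assms(1) \<open>m \<ge> 1\<close>, of a]
      wL_ev_Qset_value[OF card \<open>odd k\<close>] wL_ev_Nset_value[OF card \<open>odd k\<close>]
    unfolding m by (auto simp: diagonal exponents[unfolded m])
qed

end
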